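(* Let $k\in \mathbb{Z}_+$, $\varepsilon\in (0,1)$, let $X\subset \mathbb{R}^d$ with $|X|=n$, and let $D$ be a simultaneous $\varepsilon$-coreset of $X$ for $k$-facility $p$-Centrum for all $p\in \{1,\dots,n\}$, i.e. for every $p\in\{1,\dots,n\}$ and every $C\subset\mathbb{R}^d$ with $|C|=k$, $\mathrm{cost}_p(D,C)\in[(1-\varepsilon)\mathrm{cost}_p(X,C),(1+\varepsilon)\mathrm{cost}_p(X,C)]$. Then $D$ is a simultaneous $\varepsilon$-coreset of $X$ for Ordered $k$-Median, i.e. for every $C\subset\mathbb{R}^d$ with $|C|=k$ and every $v\in\mathbb{R}^n$ with $v_1\ge\cdots\ge v_n\ge0$, $\mathrm{cost}_v(D,C)\in[(1-\varepsilon)\mathrm{cost}_v(X,C),(1+\varepsilon)\mathrm{cost}_v(X,C)]$.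
   Context: Distances are Euclidean and $d(x,C):=\min_{c\in C}d(x,c)$. $D$ is a finite multiset (weighted set with positive integer weights). For a finite multiset $Y$ whose elements are ordered (with multiplicity) so that $d(y_1,C)\ge d(y_2,C)\ge\cdots$, $\mathrm{cost}_p(Y,C):=\sum_{i=1}^{\min(p,|Y|)}d(y_i,C)$ and, for $v\in\mathbb{R}^n$, $\mathrm{cost}_v(Y,C):=\sum_{i=1}^{\min(n,|Y|)}v_i\,d(y_i,C)$. *)

theory Defs
  imports "HOL-Analysis.Analysis" "HOL-Library.Multiset"
begin

definition dC :: "'a::metric_space set \<Rightarrow> 'a \<Rightarrow> real" where
  "dC C x = Min ((\<lambda>c. dist x c) ` C)"

definition sorted_dists :: "'a::metric_space multiset \<Rightarrow> 'a set \<Rightarrow> real list" where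
  "sorted_dists Y C = rev (sorted_list_of_multiset (image_mset (dC C) Y))"

definition cost_p :: "nat \<Rightarrow> 'a::metric_space multiset \<Rightarrow> 'a set \<Rightarrow> real" where
  "cost_p p Y C = sum_list (take p (sorted_dists Y C))"

definition cost_v :: "nat \<Rightarrow> (nat \<Rightarrow> real) \<Rightarrow> 'a::metric_space multiset \<Rightarrow> 'a set \<Rightarrow> real" where
  "cost_v n v Y C = (\<Sum>i=1..min n (size Y). v i * (sorted_dists Y C ! (i - 1)))"

end

theory Submission
  imports Defs
begin

text \<open>Summation by parts turns the ordered weighted cost into a combination of the
  p-Centrum costs with the weights v p - v (p+1) and v n, which are nonnegative
  whenever v is non-increasing and nonnegative. The coreset bounds for every
  p-Centrum cost are therefore inherited by every such combination.\<close>

lemma sum_nth_by_parts_take: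
  fixes s :: "real list" and v :: "nat \<Rightarrow> real"
  shows "(\<Sum>i=1..min n (length s). v i * s ! (i - 1)) =
    (\<Sum>p=1..n. (v p - v (Suc p)) * sum_list (take p s)) + v (Suc n) * sum_list (take n s)"
proof (induction n)
  case 0
  then show ?case by simp
next
  case (Suc n)
  have take_Suc: "sum_list (take (Suc n) s) = sum_list (take n s) + (if n < length s then s ! n else 0)"
    by (simp add: take_Suc_conv_app_nth)
  have sum_Suc: "(\<Sum>i=1..min (Suc n) (length s). v i * s ! (i - 1)) =
     (\<Sum>i=1..min n (length s). v i * s ! (i - 1)) + (if n < length s then v (Suc n) * s ! n else 0)"
  proof (cases "n < length s")
    case True
    then have "min (Suc n) (length s) = Suc (min n (length s))" "min n (length s) = n" by auto
    then show ?thesis using True by simp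
  next
    case False
    then have "min (Suc n) (length s) = min n (length s)" by auto
    then show ?thesis using False by simp
  qed
  show ?case
    using take_Suc unfolding sum_Suc Suc by (cases "n < length s") (simp_all add: algebra_simps)
qed

lemma length_sorted_dists [simp]: "length (sorted_dists Y C) = size Y"
proof -
  have "length (sorted_list_of_multiset (image_mset (dC C) Y)) =
      size (mset (sorted_list_of_multiset (image_mset (dC C) Y)))"
    by (simp only: size_mset)
  then show ?thesis by (simp add: sorted_dists_def)
qed

definition rank_weight :: "nat \<Rightarrow> (nat \<Rightarrow> real) \<Rightarrow> nat \<Rightarrow> real" where
  "rank_weight n v p = (if p < n then v p - v (Suc p) else v n)"

lemma rank_weight_nonneg:
  assumes "\<forall>i\<in>{1..<n}. v i \<ge> v (Suc i)" and "\<forall>i\<in>{1..n}. v i \<ge> 0" and "p \<in> {1..n}"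
  shows "rank_weight n v p \<ge> 0"
  using assms by (auto simp: rank_weight_def)

lemma cost_v_eq_sum_cost_p:
  "cost_v n v Y C = (\<Sum>p=1..n. rank_weight n v p * cost_p p Y C)"
proof -
  \<comment> \<open>cost_v never reads v (n+1); zeroing it removes the boundary term of the summation by parts\<close>
  let ?w = "v(Suc n := 0)"
  have "cost_v n v Y C = cost_v n ?w Y C"
    unfolding cost_v_def by (intro sum.cong) auto
  also have "\<dots> = (\<Sum>p=1..n. (?w p - ?w (Suc p)) * cost_p p Y C)"
    unfolding cost_v_def cost_p_def
    using sum_nth_by_parts_take[where n=n and s="sorted_dists Y C" and v="v(Suc n := 0)"]
    by simp
  also have "\<dots> = (\<Sum>p=1..n. rank_weight n v p * cost_p p Y C)"
    by (intro sum.cong) (auto simp: rank_weight_def)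
  finally show ?thesis .
qed

lemma sum_nonneg_combination_bounds:
  fixes c a b :: "'i \<Rightarrow> real"
  assumes "\<And>p. p \<in> P \<Longrightarrow> c p \<ge> 0"
    and "\<And>p. p \<in> P \<Longrightarrow> l * a p \<le> b p \<and> b p \<le> u * a p"
  shows "l * (\<Sum>p\<in>P. c p * a p) \<le> (\<Sum>p\<in>P. c p * b p) \<and>
         (\<Sum>p\<in>P. c p * b p) \<le> u * (\<Sum>p\<in>P. c p * a p)"
proof
  have "l * (\<Sum>p\<in>P. c p * a p) = (\<Sum>p\<in>P. c p * (l * a p))"
    by (simp add: sum_distrib_left algebra_simps)
  also have "\<dots> \<le> (\<Sum>p\<in>P. c p * b p)"
    by (intro sum_mono mult_left_mono) (use assms in auto)
  finally show "l * (\<Sum>p\<in>P. c p * a p) \<le> (\<Sum>p\<in>P. c p * b p)" .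
next
  have "(\<Sum>p\<in>P. c p * b p) \<le> (\<Sum>p\<in>P. c p * (u * a p))"
    by (intro sum_mono mult_left_mono) (use assms in auto)
  also have "\<dots> = u * (\<Sum>p\<in>P. c p * a p)"
    by (simp add: sum_distrib_left algebra_simps)
  finally show "(\<Sum>p\<in>P. c p * b p) \<le> u * (\<Sum>p\<in>P. c p * a p)" .
qed

theorem lemma4p7:
  fixes X :: "'a::euclidean_space set" and D :: "'a multiset"
    and k n :: nat and \<epsilon> :: real
  assumes "k \<ge> 1"
    and "0 < \<epsilon>" and "\<epsilon> < 1"
    and "finite X" and "card X = n"
    and "\<And>p C. p \<in> {1..n} \<Longrightarrow> finite C \<Longrightarrow> card C = k \<Longrightarrow>
           (1 - \<epsilon>) * cost_p p (mset_set X) C \<le> cost_p p D C \<and>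
           cost_p p D C \<le> (1 + \<epsilon>) * cost_p p (mset_set X) C"
  shows "\<forall>C v. finite C \<and> card C = k \<and>
           (\<forall>i\<in>{1..<n}. v i \<ge> v (Suc i)) \<and> (\<forall>i\<in>{1..n}. v i \<ge> 0) \<longrightarrow>
           (1 - \<epsilon>) * cost_v n v (mset_set X) C \<le> cost_v n v D C \<and>
           cost_v n v D C \<le> (1 + \<epsilon>) * cost_v n v (mset_set X) C"
proof (intro allI impI)
  fix C :: "'a set" and v :: "nat \<Rightarrow> real"
  assume "finite C \<and> card C = k \<and>
           (\<forall>i\<in>{1..<n}. v i \<ge> v (Suc i)) \<and> (\<forall>i\<in>{1..n}. v i \<ge> 0)"
  then have C: "finite C" "card C = k"
    and v: "\<forall>i\<in>{1..<n}. v i \<ge> v (Suc i)" "\<forall>i\<in>{1..n}. v i \<ge> 0"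
    by auto
  show "(1 - \<epsilon>) * cost_v n v (mset_set X) C \<le> cost_v n v D C \<and>
           cost_v n v D C \<le> (1 + \<epsilon>) * cost_v n v (mset_set X) C"
    unfolding cost_v_eq_sum_cost_p
    by (rule sum_nonneg_combination_bounds[OF rank_weight_nonneg[OF v] assms(6)[OF _ C]])
qed

end
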